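(* For every $\rho\in\mathfrak{M}_L^1(\mathbb{R}^d)$, $\Upsilon_{-2,2}(\mathcal{A}_1(\rho))=\mathcal{A}_1(\Upsilon^0(\rho))$.
   Context: A Lévy measure on $\mathbb{R}^d$ is a measure $\nu$ with $\nu(\{0\})=0$ and $\int(1\wedge|x|^2)\nu(\mathrm{d}x)<\infty$; $\mathfrak{M}_L^1(\mathbb{R}^d)$ is the class of those with $\int(1\wedge|x|)\nu(\mathrm{d}x)<\infty$. $a_1(r;s)=2\pi^{-1}(s-r^2)^{-1/2}$ for $0<r<s^{1/2}$, $0$ otherwise; $\mathcal{A}_1(\nu)(B)=\int_{\mathbb{R}^d\setminus\{0\}}\nu(\mathrm{d}x)\int_0^\infty a_1(r;|x|)1_B(rx/|x|)\mathrm{d}r$. $\Upsilon^0(\nu)(B)=\int_0^\infty\nu(u^{-1}B)e^{-u}\mathrm{d}u$ and $\Upsilon_{-2,2}(\nu)(B)=\int_0^\infty\nu(s^{-1}B)\,2se^{-s^2}\mathrm{d}s$, where $u^{-1}B=\{u^{-1}x:x\in B\}$. *)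

theory Defs
  imports "HOL-Analysis.Analysis"
begin

definition levy_measure :: "'a::euclidean_space measure \<Rightarrow> bool" where
  "levy_measure \<nu> \<longleftrightarrow> sets \<nu> = sets borel \<and> emeasure \<nu> {0} = 0 \<and>
     (\<integral>\<^sup>+ x. ennreal (min 1 (norm x ^ 2)) \<partial>\<nu>) < \<infinity>"

definition levy_measure_L1 :: "'a::euclidean_space measure \<Rightarrow> bool" where
  "levy_measure_L1 \<nu> \<longleftrightarrow> levy_measure \<nu> \<and>
     (\<integral>\<^sup>+ x. ennreal (min 1 (norm x)) \<partial>\<nu>) < \<infinity>"

definition a1 :: "real \<Rightarrow> real \<Rightarrow> real" where
  "a1 r s = (if 0 < r \<and> r < sqrt s then 2 / pi * (1 / sqrt (s - r^2)) else 0)"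

definition A1 :: "'a::euclidean_space measure \<Rightarrow> 'a measure" where
  "A1 \<nu> = measure_of UNIV (sets borel)
     (\<lambda>B. \<integral>\<^sup>+ x. indicator (- {0}) x *
            (\<integral>\<^sup>+ r. indicator {0<..} r * ennreal (a1 r (norm x)) *
                     indicator B ((r / norm x) *\<^sub>R x) \<partial>lborel) \<partial>\<nu>)"

definition Upsilon0 :: "'a::euclidean_space measure \<Rightarrow> 'a measure" where
  "Upsilon0 \<nu> = measure_of UNIV (sets borel)
     (\<lambda>B. \<integral>\<^sup>+ u. indicator {0<..} u * emeasure \<nu> ((\<lambda>x. u *\<^sub>R x) -` B) *
            ennreal (exp (- u)) \<partial>lborel)"

definition Upsilon_m2_2 :: "'a::euclidean_space measure \<Rightarrow> 'a measure" where
  "Upsilon_m2_2 \<nu> = measure_of UNIV (sets borel)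
     (\<lambda>B. \<integral>\<^sup>+ s. indicator {0<..} s * emeasure \<nu> ((\<lambda>x. s *\<^sub>R x) -` B) *
            ennreal (2 * s * exp (- (s^2))) \<partial>lborel)"

end

theory Submission
  imports Defs
begin

text \<open>
  For a point x \<noteq> 0, the measure A1 of the unit mass at x lives on the ray through x
  with density a1(r; |x|). The scaling law c * a1(c r; c^2 s) = a1(r; s) turns its
  Upsilon_{-2,2}-image, evaluated on G(r) = 1_B(r x / |x|), into
  int 2s exp(-s^2) int a1(r; s^2 |x|) G(r) dr ds, whereas A1 of the Upsilon^0-image of the unit
  mass gives int exp(-u) int a1(r; u |x|) G(r) dr du. The substitution u = s^2 identifies the
  two. Integrating this identity over rho gives the theorem; Tonelli's theorem applies because
  a Levy measure is sigma-finite.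
\<close>

lemma a1_nonneg: "0 \<le> a1 r s"
proof (cases "0 < r \<and> r < sqrt s")
  case True
  then have "r\<^sup>2 < s"
    using real_sqrt_less_iff[of "r\<^sup>2" s] by simp
  then show ?thesis
    by (simp add: a1_def)
next
  case False
  then show ?thesis
    by (auto simp: a1_def)
qed

lemma a1_nonpos [simp]: "r \<le> 0 \<Longrightarrow> a1 r s = 0"
  by (simp add: a1_def)

lemma a1_measurable [measurable]:
  assumes [measurable]: "f \<in> borel_measurable M" "g \<in> borel_measurable M"
  shows "(\<lambda>x. a1 (f x) (g x)) \<in> borel_measurable M"
  unfolding a1_def by measurable

lemma a1_scale:
  assumes "0 < c"
  shows "c * a1 (c * r) (c\<^sup>2 * s) = a1 r s"
proof -
  have sqrt_scale: "sqrt (c\<^sup>2 * s) = c * sqrt s"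
    using assms by (simp add: real_sqrt_mult)
  have "c\<^sup>2 * s - (c * r)\<^sup>2 = c\<^sup>2 * (s - r\<^sup>2)"
    by (simp add: power_mult_distrib algebra_simps)
  then have "sqrt (c\<^sup>2 * s - (c * r)\<^sup>2) = c * sqrt (s - r\<^sup>2)"
    using assms by (simp add: real_sqrt_mult)
  then show ?thesis
    using assms by (simp add: a1_def sqrt_scale zero_less_mult_iff)
qed

lemma nn_integral_a1_scale:
  fixes G :: "real \<Rightarrow> ennreal"
  assumes [measurable]: "G \<in> borel_measurable borel" and "0 < c"
  shows "(\<integral>\<^sup>+r. ennreal (a1 r (c\<^sup>2 * s)) * G r \<partial>lborel)
       = (\<integral>\<^sup>+v. ennreal (a1 v s) * G (c * v) \<partial>lborel)"
proof -
  have "(\<integral>\<^sup>+r. ennreal (a1 r (c\<^sup>2 * s)) * G r \<partial>lborel)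
      = ennreal \<bar>c\<bar> * (\<integral>\<^sup>+v. ennreal (a1 (0 + c * v) (c\<^sup>2 * s)) * G (0 + c * v) \<partial>lborel)"
    by (rule nn_integral_real_affine) (use assms in auto)
  also have "\<dots> = ennreal c * (\<integral>\<^sup>+v. ennreal (a1 (c * v) (c\<^sup>2 * s)) * G (c * v) \<partial>lborel)"
    using assms by simp
  also have "\<dots> = (\<integral>\<^sup>+v. ennreal c * (ennreal (a1 (c * v) (c\<^sup>2 * s)) * G (c * v)) \<partial>lborel)"
    by (rule nn_integral_cmult[symmetric]) measurable
  also have "\<dots> = (\<integral>\<^sup>+v. ennreal (a1 v s) * G (c * v) \<partial>lborel)"
  proof (rule nn_integral_cong)
    fix v
    have "ennreal c * ennreal (a1 (c * v) (c\<^sup>2 * s)) = ennreal (a1 v s)"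
      using \<open>0 < c\<close> by (simp add: ennreal_mult[symmetric] a1_nonneg a1_scale)
    then show "ennreal c * (ennreal (a1 (c * v) (c\<^sup>2 * s)) * G (c * v)) = ennreal (a1 v s) * G (c * v)"
      by (simp add: mult.assoc[symmetric])
  qed
  finally show ?thesis .
qed

lemma nn_integral_atLeast_eq_SUP:
  fixes f :: "real \<Rightarrow> ennreal" and b :: "nat \<Rightarrow> real"
  assumes [measurable]: "f \<in> borel_measurable borel"
    and "incseq b" and "filterlim b at_top sequentially"
  shows "(\<integral>\<^sup>+x. f x * indicator {a..} x \<partial>lborel) = (SUP n. \<integral>\<^sup>+x. f x * indicator {a..b n} x \<partial>lborel)"
proof -
  have SUP_eq: "(SUP n. f x * indicator {a..b n} x) = f x * indicator {a..} x" for x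
  proof (rule antisym)
    show "(SUP n. f x * indicator {a..b n} x) \<le> f x * indicator {a..} x"
      by (intro SUP_least mult_left_mono indicator_leI) auto
    have "eventually (\<lambda>n. x \<le> b n) sequentially"
      using assms(3) by (simp add: filterlim_at_top)
    then obtain n where "x \<le> b n"
      by (auto simp: eventually_sequentially)
    then have "f x * indicator {a..} x \<le> f x * indicator {a..b n} x"
      by (intro mult_left_mono indicator_leI) auto
    also have "\<dots> \<le> (SUP n. f x * indicator {a..b n} x)"
      by (rule SUP_upper) simp
    finally show "f x * indicator {a..} x \<le> (SUP n. f x * indicator {a..b n} x)" .
  qed
  have "incseq (\<lambda>n x. f x * indicator {a..b n} x)"
    using \<open>incseq b\<close> by (intro monoI le_funI mult_left_mono indicator_leI) (auto dest: monoD)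
  then have "(\<integral>\<^sup>+x. (SUP n. f x * indicator {a..b n} x) \<partial>lborel) = (SUP n. \<integral>\<^sup>+x. f x * indicator {a..b n} x \<partial>lborel)"
    by (rule nn_integral_monotone_convergence_SUP) measurable
  then show ?thesis
    by (simp only: SUP_eq)
qed

lemma nn_integral_square_substitution:
  fixes f :: "real \<Rightarrow> ennreal"
  assumes [measurable]: "f \<in> borel_measurable borel"
  shows "(\<integral>\<^sup>+u. f u * indicator {0<..} u \<partial>lborel)
       = (\<integral>\<^sup>+s. f (s\<^sup>2) * ennreal (2 * s) * indicator {0<..} s \<partial>lborel)"
proof -
  define g where "g u = f u * indicator {0<..} u" for u
  have [measurable]: "g \<in> borel_measurable borel"
    unfolding g_def by measurable
  have Suc_unbounded: "filterlim (\<lambda>n. real (Suc n)) at_top sequentially"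
    by (subst filterlim_sequentially_Suc) (rule filterlim_real_sequentially)
  have "(\<integral>\<^sup>+u. f u * indicator {0<..} u \<partial>lborel) = (\<integral>\<^sup>+u. g u * indicator {0..} u \<partial>lborel)"
    by (intro nn_integral_cong) (simp add: g_def split: split_indicator)
  also have "\<dots> = (SUP n. \<integral>\<^sup>+u. g u * indicator {0..real (Suc n) ^ 2} u \<partial>lborel)"
    by (rule nn_integral_atLeast_eq_SUP)
       (use Suc_unbounded in \<open>auto simp: incseq_def intro!: power_mono filterlim_pow_at_top\<close>)
  also have "\<dots> = (SUP n. \<integral>\<^sup>+s. g (s\<^sup>2) * ennreal (2 * s) * indicator {0..real (Suc n)} s \<partial>lborel)"
  proof (rule SUP_cong)
    fix n :: nat
    have "(\<integral>\<^sup>+u. g u * indicator {(\<lambda>s. s\<^sup>2) 0..(\<lambda>s. s\<^sup>2) (real (Suc n))} u \<partial>lborel)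
        = (\<integral>\<^sup>+s. g ((\<lambda>s. s\<^sup>2) s) * ennreal (2 * s) * indicator {0..real (Suc n)} s \<partial>lborel)"
      by (rule nn_integral_substitution_aux) (auto intro!: derivative_eq_intros continuous_intros)
    then show "(\<integral>\<^sup>+u. g u * indicator {0..real (Suc n) ^ 2} u \<partial>lborel)
        = (\<integral>\<^sup>+s. g (s\<^sup>2) * ennreal (2 * s) * indicator {0..real (Suc n)} s \<partial>lborel)"
      by simp
  qed simp
  also have "\<dots> = (\<integral>\<^sup>+s. g (s\<^sup>2) * ennreal (2 * s) * indicator {0..} s \<partial>lborel)"
    by (rule nn_integral_atLeast_eq_SUP[symmetric])
       (use Suc_unbounded in \<open>auto simp: incseq_def\<close>)
  also have "\<dots> = (\<integral>\<^sup>+s. f (s\<^sup>2) * ennreal (2 * s) * indicator {0<..} s \<partial>lborel)"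
    by (intro nn_integral_cong) (simp add: g_def split: split_indicator)
  finally show ?thesis .
qed

lemma nn_integral_a1_Rayleigh_eq_exponential:
  fixes G :: "real \<Rightarrow> ennreal"
  assumes [measurable]: "G \<in> borel_measurable borel"
  shows "(\<integral>\<^sup>+s. indicator {0<..} s * ennreal (2 * s * exp (- s\<^sup>2)) *
            (\<integral>\<^sup>+r. ennreal (a1 r t) * G (s * r) \<partial>lborel) \<partial>lborel)
       = (\<integral>\<^sup>+u. indicator {0<..} u * ennreal (exp (- u)) *
            (\<integral>\<^sup>+r. ennreal (a1 r (u * t)) * G r \<partial>lborel) \<partial>lborel)"
proof -
  define F where "F u = ennreal (exp (- u)) * (\<integral>\<^sup>+r. ennreal (a1 r (u * t)) * G r \<partial>lborel)" for u
  have [measurable]: "F \<in> borel_measurable borel"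
    unfolding F_def by measurable
  have F_square: "F (s\<^sup>2) * ennreal (2 * s) = ennreal (2 * s * exp (- s\<^sup>2)) *
      (\<integral>\<^sup>+r. ennreal (a1 r t) * G (s * r) \<partial>lborel)" if "0 < s" for s
  proof -
    have "(\<integral>\<^sup>+r. ennreal (a1 r (s\<^sup>2 * t)) * G r \<partial>lborel) = (\<integral>\<^sup>+r. ennreal (a1 r t) * G (s * r) \<partial>lborel)"
      using that by (intro nn_integral_a1_scale) auto
    then show ?thesis
      unfolding F_def using that by (simp add: ennreal_mult' mult_ac)
  qed
  have "(\<integral>\<^sup>+u. indicator {0<..} u * ennreal (exp (- u)) *
            (\<integral>\<^sup>+r. ennreal (a1 r (u * t)) * G r \<partial>lborel) \<partial>lborel)
      = (\<integral>\<^sup>+u. F u * indicator {0<..} u \<partial>lborel)"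
    by (simp add: F_def mult_ac)
  also have "\<dots> = (\<integral>\<^sup>+s. F (s\<^sup>2) * ennreal (2 * s) * indicator {0<..} s \<partial>lborel)"
    by (rule nn_integral_square_substitution) measurable
  also have "\<dots> = (\<integral>\<^sup>+s. indicator {0<..} s * ennreal (2 * s * exp (- s\<^sup>2)) *
            (\<integral>\<^sup>+r. ennreal (a1 r t) * G (s * r) \<partial>lborel) \<partial>lborel)"
    by (intro nn_integral_cong) (simp add: F_square split: split_indicator)
  finally show ?thesis ..
qed

lemma sigma_finite_measureI_nn_integral_finite:
  fixes f :: "'a \<Rightarrow> real"
  assumes [measurable]: "f \<in> borel_measurable M"
    and "(\<integral>\<^sup>+x. ennreal (f x) \<partial>M) < \<infinity>" and "emeasure M {x \<in> space M. f x \<le> 0} \<noteq> \<infinity>"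
  shows "sigma_finite_measure M"
proof
  define A where "A n = {x \<in> space M. 1 \<le> of_nat n * ennreal (f x)}" for n
  have A_sets: "A n \<in> sets M" for n
    unfolding A_def by measurable
  have A_finite: "emeasure M (A n) \<noteq> \<infinity>" for n
  proof -
    have "emeasure M (A n) \<le> of_nat n * (\<integral>\<^sup>+x. ennreal (f x) * indicator (space M) x \<partial>M)"
      unfolding A_def by (rule nn_integral_Markov_inequality) auto
    also have "\<dots> = of_nat n * (\<integral>\<^sup>+x. ennreal (f x) \<partial>M)"
      by (intro arg_cong[where f = "\<lambda>I. of_nat n * I"] nn_integral_cong) simp
    also have "\<dots> < \<infinity>"
      using assms(2) by (simp add: ennreal_mult_less_top of_nat_less_top)
    finally show ?thesis
      by simp
  qed
  have "x \<in> (\<Union>n. A n)" if "x \<in> space M" "\<not> f x \<le> 0" for x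
  proof -
    from that have "0 < f x"
      by simp
    obtain n where "inverse (f x) < real n"
      using reals_Archimedean2 by blast
    then have "1 \<le> real n * f x"
      using \<open>0 < f x\<close> by (simp add: inverse_eq_divide divide_less_eq)
    then have "ennreal 1 \<le> ennreal (real n * f x)"
      by (rule ennreal_leI)
    then have "1 \<le> of_nat n * ennreal (f x)"
      using \<open>0 < f x\<close> by (simp add: ennreal_mult ennreal_of_nat_eq_real_of_nat)
    then show ?thesis
      using that by (auto simp: A_def)
  qed
  then have "space M = {x \<in> space M. f x \<le> 0} \<union> (\<Union>n. A n)"
    using sets.sets_into_space[OF A_sets] by blast
  then show "\<exists>C. countable C \<and> C \<subseteq> sets M \<and> \<Union>C = space M \<and> (\<forall>c\<in>C. emeasure M c \<noteq> \<infinity>)"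
    using assms(3) A_sets A_finite
    by (intro exI[of _ "insert {x \<in> space M. f x \<le> 0} (range A)"]) auto
qed

lemma levy_measure_sigma_finite:
  fixes \<nu> :: "'a::euclidean_space measure"
  assumes "levy_measure \<nu>"
  shows "sigma_finite_measure \<nu>"
proof -
  have sets_eq [measurable_cong]: "sets \<nu> = sets borel" and "emeasure \<nu> {0} = 0"
    and "(\<integral>\<^sup>+x. ennreal (min 1 (norm x ^ 2)) \<partial>\<nu>) < \<infinity>"
    using assms by (auto simp: levy_measure_def)
  moreover have "{x \<in> space \<nu>. min 1 (norm x ^ 2) \<le> 0} = {0}"
    by (auto simp: sets_eq_imp_space_eq[OF sets_eq] min_def)
  ultimately show ?thesis
    by (intro sigma_finite_measureI_nn_integral_finite[where f = "\<lambda>x. min 1 (norm x ^ 2)"]) auto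
qed

lemma measure_of_borel_eqI:
  fixes M :: "'a::topological_space measure"
  assumes sets_M: "sets M = sets borel" and F: "\<And>B. B \<in> sets borel \<Longrightarrow> F B = emeasure M B"
  shows "measure_of UNIV (sets borel) F = M"
proof -
  have "measure_of UNIV (sets borel) F = measure_of UNIV (sets borel) (emeasure M)"
    by (rule measure_of_eq) (auto simp: F sets.sigma_sets_eq[of borel, simplified])
  also have "\<dots> = M"
    using measure_of_of_measure[of M] sets_eq_imp_space_eq[OF sets_M] sets_M by simp
  finally show ?thesis .
qed

lemma emeasure_distr_density_pair:
  fixes f :: "'a \<Rightarrow> 'b \<Rightarrow> ennreal" and g :: "'a \<Rightarrow> 'b \<Rightarrow> 'c::topological_space"
  assumes "sigma_finite_measure N"
    and [measurable]: "(\<lambda>(x, y). f x y) \<in> borel_measurable (M \<Otimes>\<^sub>M N)"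
      "(\<lambda>(x, y). g x y) \<in> borel_measurable (M \<Otimes>\<^sub>M N)" "B \<in> sets borel"
  shows "emeasure (distr (density (M \<Otimes>\<^sub>M N) (\<lambda>(x, y). f x y)) borel (\<lambda>(x, y). g x y)) B
       = (\<integral>\<^sup>+x. \<integral>\<^sup>+y. f x y * indicator B (g x y) \<partial>N \<partial>M)"
proof -
  have "emeasure (distr (density (M \<Otimes>\<^sub>M N) (\<lambda>(x, y). f x y)) borel (\<lambda>(x, y). g x y)) B
      = (\<integral>\<^sup>+p. (\<lambda>(x, y). f x y * indicator B (g x y)) p \<partial>(M \<Otimes>\<^sub>M N))"
  proof -
    have "(\<lambda>(x, y). g x y) -` B \<inter> space (M \<Otimes>\<^sub>M N) \<in> sets (M \<Otimes>\<^sub>M N)"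
      by measurable
    then show ?thesis
      by (simp add: emeasure_distr emeasure_density)
         (auto intro!: nn_integral_cong split: split_indicator)
  qed
  also have "\<dots> = (\<integral>\<^sup>+x. \<integral>\<^sup>+y. f x y * indicator B (g x y) \<partial>N \<partial>M)"
    using sigma_finite_measure.nn_integral_fst[OF assms(1), of "\<lambda>(x, y). f x y * indicator B (g x y)" M]
    by simp
  finally show ?thesis .
qed

lemma measure_of_eq_distr_density_pair:
  fixes f :: "'a \<Rightarrow> 'b \<Rightarrow> ennreal" and g :: "'a \<Rightarrow> 'b \<Rightarrow> 'c::topological_space"
  assumes "sigma_finite_measure N"
    and "(\<lambda>(x, y). f x y) \<in> borel_measurable (M \<Otimes>\<^sub>M N)" "(\<lambda>(x, y). g x y) \<in> borel_measurable (M \<Otimes>\<^sub>M N)"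
    and "\<And>B. B \<in> sets borel \<Longrightarrow> F B = (\<integral>\<^sup>+x. \<integral>\<^sup>+y. f x y * indicator B (g x y) \<partial>N \<partial>M)"
  shows "measure_of UNIV (sets borel) F = distr (density (M \<Otimes>\<^sub>M N) (\<lambda>(x, y). f x y)) borel (\<lambda>(x, y). g x y)"
  using assms by (intro measure_of_borel_eqI) (simp_all add: emeasure_distr_density_pair)

definition A1_kernel :: "'a::euclidean_space \<Rightarrow> 'a set \<Rightarrow> ennreal" where
  "A1_kernel x B =
     (\<integral>\<^sup>+r. indicator (- {0}) x * ennreal (a1 r (norm x)) * indicator B ((r / norm x) *\<^sub>R x) \<partial>lborel)"

lemma A1_kernel_zero [simp]: "A1_kernel 0 B = 0"
  by (simp add: A1_kernel_def)

lemma A1_kernel_measurable [measurable]: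
  assumes [measurable]: "f \<in> borel_measurable M" "B \<in> sets borel"
  shows "(\<lambda>w. A1_kernel (f w) B) \<in> borel_measurable M"
  unfolding A1_kernel_def by measurable

lemma A1_kernel_scaled_measurable [measurable]:
  assumes [measurable]: "f \<in> borel_measurable M" "g \<in> borel_measurable M" "B \<in> sets borel"
  shows "(\<lambda>w. A1_kernel (f w) ((\<lambda>y. g w *\<^sub>R y) -` B)) \<in> borel_measurable M"
  unfolding A1_kernel_def indicator_vimage by measurable

lemma sets_A1 [simp]: "sets (A1 \<nu>) = sets borel"
  by (simp add: A1_def sets_measure_of_conv sets.sigma_sets_eq[of borel, simplified])

lemma sets_Upsilon0 [simp]: "sets (Upsilon0 \<nu>) = sets borel"
  by (simp add: Upsilon0_def sets_measure_of_conv sets.sigma_sets_eq[of borel, simplified])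

lemma A1_eq_distr:
  fixes \<nu> :: "'a::euclidean_space measure"
  assumes [measurable_cong]: "sets \<nu> = sets borel"
  shows "A1 \<nu> = distr (density (\<nu> \<Otimes>\<^sub>M lborel) (\<lambda>(x, r). indicator (- {0}) x * ennreal (a1 r (norm x))))
                  borel (\<lambda>(x, r). (r / norm x) *\<^sub>R x)"
  unfolding A1_def
proof (rule measure_of_eq_distr_density_pair)
  show "(\<lambda>(x, r). (r / norm x) *\<^sub>R x) \<in> borel_measurable (\<nu> \<Otimes>\<^sub>M lborel)"
    by measurable
  show "(\<lambda>(x, r). indicator (- {0}) x * ennreal (a1 r (norm x))) \<in> borel_measurable (\<nu> \<Otimes>\<^sub>M lborel)"
    by measurable
  fix B :: "'a set"
  show "(\<integral>\<^sup>+x. indicator (- {0}) x *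
          (\<integral>\<^sup>+r. indicator {0<..} r * ennreal (a1 r (norm x)) * indicator B ((r / norm x) *\<^sub>R x) \<partial>lborel) \<partial>\<nu>)
        = (\<integral>\<^sup>+x. \<integral>\<^sup>+r. indicator (- {0}) x * ennreal (a1 r (norm x)) * indicator B ((r / norm x) *\<^sub>R x) \<partial>lborel \<partial>\<nu>)"
  proof (intro nn_integral_cong)
    fix x :: 'a
    show "indicator (- {0}) x *
          (\<integral>\<^sup>+r. indicator {0<..} r * ennreal (a1 r (norm x)) * indicator B ((r / norm x) *\<^sub>R x) \<partial>lborel)
        = (\<integral>\<^sup>+r. indicator (- {0}) x * ennreal (a1 r (norm x)) * indicator B ((r / norm x) *\<^sub>R x) \<partial>lborel)"
      by (cases "x = 0") (auto intro!: nn_integral_cong split: split_indicator)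
  qed
qed (rule lborel.sigma_finite_measure_axioms)

lemma emeasure_A1:
  fixes \<nu> :: "'a::euclidean_space measure"
  assumes [measurable_cong]: "sets \<nu> = sets borel" and [measurable]: "B \<in> sets borel"
  shows "emeasure (A1 \<nu>) B = (\<integral>\<^sup>+x. A1_kernel x B \<partial>\<nu>)"
proof -
  have "emeasure (A1 \<nu>) B = (\<integral>\<^sup>+x. \<integral>\<^sup>+r. indicator (- {0}) x * ennreal (a1 r (norm x)) * indicator B ((r / norm x) *\<^sub>R x) \<partial>lborel \<partial>\<nu>)"
    unfolding A1_eq_distr[OF assms(1)]
    by (rule emeasure_distr_density_pair[OF lborel.sigma_finite_measure_axioms]) measurable
  then show ?thesis
    by (simp add: A1_kernel_def)
qed

lemma Upsilon0_eq_distr: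
  fixes \<nu> :: "'a::euclidean_space measure"
  assumes "sigma_finite_measure \<nu>" and [measurable_cong]: "sets \<nu> = sets borel"
  shows "Upsilon0 \<nu> = distr (density (lborel \<Otimes>\<^sub>M \<nu>) (\<lambda>(u, x). indicator {0<..} u * ennreal (exp (- u))))
                       borel (\<lambda>(u, x). u *\<^sub>R x)"
  unfolding Upsilon0_def
proof (rule measure_of_eq_distr_density_pair[OF assms(1)])
  show "(\<lambda>(u, x). indicator {0<..} u * ennreal (exp (- u))) \<in> borel_measurable (lborel \<Otimes>\<^sub>M \<nu>)"
    by measurable
  show "(\<lambda>(u, x). u *\<^sub>R x) \<in> borel_measurable (lborel \<Otimes>\<^sub>M \<nu>)"
    by measurable
  fix B :: "'a set"
  assume [measurable]: "B \<in> sets borel"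
  have "emeasure \<nu> ((\<lambda>x. u *\<^sub>R x) -` B) = (\<integral>\<^sup>+x. indicator B (u *\<^sub>R x) \<partial>\<nu>)" for u :: real
  proof -
    have "(\<lambda>x. u *\<^sub>R x) -` B \<in> sets \<nu>"
      using measurable_sets_borel[of "\<lambda>x::'a. u *\<^sub>R x" borel B] by simp
    then show ?thesis
      by (simp flip: nn_integral_indicator add: indicator_vimage)
  qed
  then show "(\<integral>\<^sup>+u. indicator {0<..} u * emeasure \<nu> ((\<lambda>x. u *\<^sub>R x) -` B) * ennreal (exp (- u)) \<partial>lborel)
      = (\<integral>\<^sup>+u. \<integral>\<^sup>+x. indicator {0<..} u * ennreal (exp (- u)) * indicator B (u *\<^sub>R x) \<partial>\<nu> \<partial>lborel)"
    by (simp add: nn_integral_cmult mult_ac)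
qed

lemma nn_integral_Upsilon0:
  fixes \<nu> :: "'a::euclidean_space measure"
  assumes "sigma_finite_measure \<nu>" and [measurable_cong]: "sets \<nu> = sets borel"
    and [measurable]: "H \<in> borel_measurable borel"
  shows "(\<integral>\<^sup>+y. H y \<partial>Upsilon0 \<nu>) = (\<integral>\<^sup>+x. \<integral>\<^sup>+u. indicator {0<..} u * ennreal (exp (- u)) * H (u *\<^sub>R x) \<partial>lborel \<partial>\<nu>)"
proof -
  interpret \<nu>: sigma_finite_measure \<nu> by fact
  interpret pair_sigma_finite lborel \<nu> ..
  have "(\<integral>\<^sup>+y. H y \<partial>Upsilon0 \<nu>)
      = (\<integral>\<^sup>+p. (\<lambda>(u, x). indicator {0<..} u * ennreal (exp (- u)) * H (u *\<^sub>R x)) p \<partial>(lborel \<Otimes>\<^sub>M \<nu>))"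
    unfolding Upsilon0_eq_distr[OF assms(1,2)]
    by (simp add: nn_integral_distr nn_integral_density case_prod_beta')
  also have "\<dots> = (\<integral>\<^sup>+x. \<integral>\<^sup>+u. indicator {0<..} u * ennreal (exp (- u)) * H (u *\<^sub>R x) \<partial>lborel \<partial>\<nu>)"
    by (subst nn_integral_snd[symmetric]) simp_all
  finally show ?thesis .
qed

lemma A1_kernel_Rayleigh_eq_exponential:
  fixes x :: "'a::euclidean_space"
  assumes [measurable]: "B \<in> sets borel"
  shows "(\<integral>\<^sup>+s. indicator {0<..} s * ennreal (2 * s * exp (- s\<^sup>2)) * A1_kernel x ((\<lambda>y. s *\<^sub>R y) -` B) \<partial>lborel)
       = (\<integral>\<^sup>+u. indicator {0<..} u * ennreal (exp (- u)) * A1_kernel (u *\<^sub>R x) B \<partial>lborel)"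
proof (cases "x = 0")
  case False
  define G :: "real \<Rightarrow> ennreal" where "G r = indicator B ((r / norm x) *\<^sub>R x)" for r
  have [measurable]: "G \<in> borel_measurable borel"
    unfolding G_def by measurable
  have scaled: "A1_kernel x ((\<lambda>y. s *\<^sub>R y) -` B) = (\<integral>\<^sup>+r. ennreal (a1 r (norm x)) * G (s * r) \<partial>lborel)" for s
    using False by (simp add: A1_kernel_def G_def indicator_vimage)
  have dilated: "A1_kernel (u *\<^sub>R x) B = (\<integral>\<^sup>+r. ennreal (a1 r (u * norm x)) * G r \<partial>lborel)" if "0 < u" for u
    using False that by (simp add: A1_kernel_def G_def)
  have "(\<integral>\<^sup>+u. indicator {0<..} u * ennreal (exp (- u)) * A1_kernel (u *\<^sub>R x) B \<partial>lborel)
      = (\<integral>\<^sup>+u. indicator {0<..} u * ennreal (exp (- u)) *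
           (\<integral>\<^sup>+r. ennreal (a1 r (u * norm x)) * G r \<partial>lborel) \<partial>lborel)"
    by (intro nn_integral_cong) (simp add: dilated split: split_indicator)
  then show ?thesis
    by (simp add: scaled nn_integral_a1_Rayleigh_eq_exponential)
qed simp

lemma nn_integral_Rayleigh_emeasure_A1:
  fixes \<nu> :: "'a::euclidean_space measure"
  assumes "sigma_finite_measure \<nu>" and [measurable_cong]: "sets \<nu> = sets borel"
    and B [measurable]: "B \<in> sets borel"
  shows "(\<integral>\<^sup>+s. indicator {0<..} s * emeasure (A1 \<nu>) ((\<lambda>y. s *\<^sub>R y) -` B) * ennreal (2 * s * exp (- s\<^sup>2)) \<partial>lborel)
       = (\<integral>\<^sup>+x. \<integral>\<^sup>+s. indicator {0<..} s * ennreal (2 * s * exp (- s\<^sup>2)) * A1_kernel x ((\<lambda>y. s *\<^sub>R y) -` B) \<partial>lborel \<partial>\<nu>)"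
proof -
  interpret \<nu>: sigma_finite_measure \<nu> by fact
  interpret pair_sigma_finite lborel \<nu> ..
  have "indicator {0<..} s * emeasure (A1 \<nu>) ((\<lambda>y. s *\<^sub>R y) -` B) * ennreal (2 * s * exp (- s\<^sup>2))
      = (\<integral>\<^sup>+x. indicator {0<..} s * ennreal (2 * s * exp (- s\<^sup>2)) * A1_kernel x ((\<lambda>y. s *\<^sub>R y) -` B) \<partial>\<nu>)"
    for s :: real
  proof -
    have "(\<lambda>y. s *\<^sub>R y) -` B \<in> sets borel"
      using measurable_sets_borel[OF _ B, of "\<lambda>y. s *\<^sub>R y"] by simp
    then have "indicator {0<..} s * emeasure (A1 \<nu>) ((\<lambda>y. s *\<^sub>R y) -` B) * ennreal (2 * s * exp (- s\<^sup>2))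
        = indicator {0<..} s * ennreal (2 * s * exp (- s\<^sup>2)) * (\<integral>\<^sup>+x. A1_kernel x ((\<lambda>y. s *\<^sub>R y) -` B) \<partial>\<nu>)"
      by (simp add: emeasure_A1[OF assms(2)] mult_ac)
    also have "\<dots> = (\<integral>\<^sup>+x. indicator {0<..} s * ennreal (2 * s * exp (- s\<^sup>2)) * A1_kernel x ((\<lambda>y. s *\<^sub>R y) -` B) \<partial>\<nu>)"
      by (rule nn_integral_cmult[symmetric]) measurable
    finally show ?thesis .
  qed
  then have "(\<integral>\<^sup>+s. indicator {0<..} s * emeasure (A1 \<nu>) ((\<lambda>y. s *\<^sub>R y) -` B) * ennreal (2 * s * exp (- s\<^sup>2)) \<partial>lborel)
       = (\<integral>\<^sup>+s. \<integral>\<^sup>+x. indicator {0<..} s * ennreal (2 * s * exp (- s\<^sup>2)) * A1_kernel x ((\<lambda>y. s *\<^sub>R y) -` B) \<partial>\<nu> \<partial>lborel)"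
    by simp
  also have "\<dots> = (\<integral>\<^sup>+x. \<integral>\<^sup>+s. indicator {0<..} s * ennreal (2 * s * exp (- s\<^sup>2)) * A1_kernel x ((\<lambda>y. s *\<^sub>R y) -` B) \<partial>lborel \<partial>\<nu>)"
    by (rule Fubini'[symmetric]) measurable
  finally show ?thesis .
qed

theorem theorem3p7:
  fixes \<rho> :: "'a::euclidean_space measure"
  assumes "levy_measure_L1 \<rho>"
  shows "Upsilon_m2_2 (A1 \<rho>) = A1 (Upsilon0 \<rho>)"
proof -
  have sets_\<rho>: "sets \<rho> = sets borel" and \<sigma>: "sigma_finite_measure \<rho>"
    using assms by (simp_all add: levy_measure_L1_def levy_measure_def levy_measure_sigma_finite)
  show ?thesis
    unfolding Upsilon_m2_2_def
  proof (rule measure_of_borel_eqI)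
    fix B :: "'a set"
    assume B [measurable]: "B \<in> sets borel"
    have "(\<integral>\<^sup>+s. indicator {0<..} s * emeasure (A1 \<rho>) ((\<lambda>x. s *\<^sub>R x) -` B) * ennreal (2 * s * exp (- s\<^sup>2)) \<partial>lborel)
        = (\<integral>\<^sup>+x. \<integral>\<^sup>+s. indicator {0<..} s * ennreal (2 * s * exp (- s\<^sup>2)) * A1_kernel x ((\<lambda>y. s *\<^sub>R y) -` B) \<partial>lborel \<partial>\<rho>)"
      (is "?lhs = _")
      by (rule nn_integral_Rayleigh_emeasure_A1[OF \<sigma> sets_\<rho> B])
    also have "\<dots> = (\<integral>\<^sup>+x. \<integral>\<^sup>+u. indicator {0<..} u * ennreal (exp (- u)) * A1_kernel (u *\<^sub>R x) B \<partial>lborel \<partial>\<rho>)"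
      by (simp add: A1_kernel_Rayleigh_eq_exponential)
    also have "\<dots> = (\<integral>\<^sup>+y. A1_kernel y B \<partial>Upsilon0 \<rho>)"
      by (rule nn_integral_Upsilon0[OF \<sigma> sets_\<rho>, symmetric]) measurable
    also have "\<dots> = emeasure (A1 (Upsilon0 \<rho>)) B"
      by (simp add: emeasure_A1)
    finally show "?lhs = emeasure (A1 (Upsilon0 \<rho>)) B" .
  qed simp
qed

end
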